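(* Let $A,X\in M_n(\mathbb{C})$ and $1\le m\le n$. Then $$\|D^m\operatorname{per}A\|\le\frac{n!}{(n-m)!}\|A\|^{n-m}$$ and $$|\operatorname{per}(A+X)-\operatorname{per}A|\le(\|A\|+\|X\|)^n-\|A\|^n.$$
   Context: $\operatorname{per}A=\sum_{\sigma\in S_n}\prod_ia_{i\sigma(i)}$ is the permanent. $D^m\operatorname{per}(A)(X^1,\ldots,X^m)=\frac{\partial^m}{\partial t_1\cdots\partial t_m}\big|_{t=0}\operatorname{per}(A+t_1X^1+\cdots+t_mX^m)$, and $\|D^m\operatorname{per}A\|=\sup_{\|X^1\|=\cdots=\|X^m\|=1}|D^m\operatorname{per}(A)(X^1,\ldots,X^m)|$. $\|\cdot\|$ on matrices is the operator (spectral) norm. *)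

theory Defs
  imports "HOL-Analysis.Analysis"
begin

text \<open>Complex n x n matrices are rendered as complex^'n^'n (n = CARD('n)).\<close>

definition per :: "complex^'n^'n \<Rightarrow> complex" where
  "per A = (\<Sum>p | p permutes (UNIV::'n set). \<Prod>i\<in>UNIV. A $ i $ p i)"

text \<open>Operator (spectral) norm: induced by the Euclidean norm on complex^'n.\<close>
definition opnorm :: "complex^'n^'n \<Rightarrow> real" where
  "opnorm A = onorm (\<lambda>x::complex^'n. A *v x)"

definition cmat_scale :: "complex \<Rightarrow> complex^'n^'n \<Rightarrow> complex^'n^'n" where
  "cmat_scale c M = (\<chi> i j. c * M $ i $ j)"

fun mixed_partial :: "nat \<Rightarrow> ((nat \<Rightarrow> complex) \<Rightarrow> complex) \<Rightarrow> (nat \<Rightarrow> complex) \<Rightarrow> complex" where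
  "mixed_partial 0 g t = g t"
| "mixed_partial (Suc k) g t =
     deriv (\<lambda>s. mixed_partial k g (t(Suc k := s))) (t (Suc k))"

text \<open>D^m per(A)(X^1,...,X^m) = d^m/(dt_1...dt_m) at t=0 of per(A + t_1 X^1 + ... + t_m X^m).\<close>
definition Dper :: "nat \<Rightarrow> complex^'n^'n \<Rightarrow> (nat \<Rightarrow> complex^'n^'n) \<Rightarrow> complex" where
  "Dper m A X = mixed_partial m
      (\<lambda>t. per (A + (\<Sum>k\<in>{1..m}. cmat_scale (t k) (X k)))) (\<lambda>_. 0)"

definition Dper_norm :: "nat \<Rightarrow> complex^'n^'n \<Rightarrow> real" where
  "Dper_norm m A = Sup {norm (Dper m A X) | X. \<forall>k\<in>{1..m}. opnorm (X k) = 1}"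

end

theory Submission
  imports Defs
begin

(* Both bounds follow from one estimate on the multilinear form
     perm_form h = \<Sum>\<sigma> \<Sum>\<pi> \<Prod>l h l $ \<sigma> l $ \<pi> l     (\<sigma>, \<pi> permutations, h : slots \<Rightarrow> matrices),
   which satisfies perm_form (\<lambda>_. B) = n! * per B.  Writing u for the indicator function of
   the permutations inside the space of all maps 'n \<Rightarrow> 'n, perm_form h = <u, (\<Otimes>l h l) u>; since
   the operator norm of a tensor product of matrices is at most the product of their norms,
   Cauchy-Schwarz gives |perm_form h| \<le> n! * \<Prod>l \<parallel>h l\<parallel>.

   The perturbation bound follows by expanding perm_form (\<lambda>_. A + X) over the set of slots
   holding X.  For the derivative bound, an induction on k shows that the k-th mixed partial of
   per (A + \<Sum> t_k X^k) equals perm_form (slots filled with X^1..X^k and the current matrix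
   elsewhere) / (n-k)!; the norm bound on perm_form then gives n!/(n-m)! * \<parallel>A\<parallel>^(n-m). *)

section \<open>Tensor products of matrices acting on functions of maps\<close>

text \<open>The tensor product of the matrices h l (one for every slot l) applied to w, where
  vectors of the tensor power are functions from maps 'l \<Rightarrow> 'm to complex numbers.\<close>
definition tensor_apply ::
    "('l::finite \<Rightarrow> complex^'m^'m) \<Rightarrow> (('l \<Rightarrow> 'm::finite) \<Rightarrow> complex) \<Rightarrow> ('l \<Rightarrow> 'm) \<Rightarrow> complex" where
  "tensor_apply h w f = (\<Sum>g\<in>UNIV. (\<Prod>l\<in>UNIV. h l $ f l $ g l) * w g)"

definition sq_norm :: "('i::finite \<Rightarrow> complex) \<Rightarrow> real" where
  "sq_norm w = (\<Sum>i\<in>UNIV. (cmod (w i))^2)"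

lemma sq_norm_nonneg: "0 \<le> sq_norm w"
  unfolding sq_norm_def by (simp add: sum_nonneg)

lemma norm_vec_sq: "(norm (v::complex^'n))^2 = (\<Sum>i\<in>UNIV. (cmod (v $ i))^2)"
  unfolding norm_vec_def L2_set_def by (simp add: sum_nonneg)

lemma prod_sum_choice:
  fixes F :: "'a::finite \<Rightarrow> 'b::finite \<Rightarrow> 'c::comm_semiring_1"
  shows "(\<Prod>l\<in>UNIV. \<Sum>j\<in>UNIV. F l j) = (\<Sum>g\<in>UNIV. \<Prod>l\<in>UNIV. F l (g l))"
  using prod_sum_PiE[of "UNIV::'a set" "\<lambda>_. UNIV::'b set" F] by simp

lemma tensor_apply_comp: "tensor_apply h (tensor_apply h' w) = tensor_apply (\<lambda>l. h l ** h' l) w"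
proof
  fix f
  have "tensor_apply h (tensor_apply h' w) f =
      (\<Sum>g\<in>UNIV. \<Sum>g'\<in>UNIV. (\<Prod>l\<in>UNIV. h l $ f l $ g l) * (\<Prod>l\<in>UNIV. h' l $ g l $ g' l) * w g')"
    unfolding tensor_apply_def by (simp add: sum_distrib_left mult.assoc)
  also have "\<dots> = (\<Sum>g'\<in>UNIV. \<Sum>g\<in>UNIV. (\<Prod>l\<in>UNIV. h l $ f l $ g l * h' l $ g l $ g' l) * w g')"
    by (subst sum.swap) (simp add: prod.distrib)
  also have "\<dots> = (\<Sum>g'\<in>UNIV. (\<Prod>l\<in>UNIV. \<Sum>j\<in>UNIV. h l $ f l $ j * h' l $ j $ g' l) * w g')"
    by (simp add: prod_sum_choice sum_distrib_right)
  also have "\<dots> = tensor_apply (\<lambda>l. h l ** h' l) w f"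
    unfolding tensor_apply_def by (simp add: matrix_matrix_mult_def)
  finally show "tensor_apply h (tensor_apply h' w) f = tensor_apply (\<lambda>l. h l ** h' l) w f" .
qed

lemma tensor_apply_id:
  fixes w :: "('l::finite \<Rightarrow> 'm::finite) \<Rightarrow> complex"
  shows "tensor_apply (\<lambda>l. mat 1) w = w"
proof
  fix f :: "'l \<Rightarrow> 'm"
  have delta: "(\<Prod>l\<in>UNIV. (mat 1 :: complex^'m^'m) $ f l $ g l) = (if g = f then 1 else 0)" for g
  proof (cases "g = f")
    case False
    then obtain l where "g l \<noteq> f l" by auto
    then have "(\<Prod>l\<in>UNIV. (mat 1 :: complex^'m^'m) $ f l $ g l) = 0"
      by (intro prod_zero) (auto simp: mat_def intro!: exI[of _ l])
    then show ?thesis using False by simp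
  qed (simp add: mat_def)
  show "tensor_apply (\<lambda>l. mat 1) w f = w f"
    unfolding tensor_apply_def delta by (simp add: if_distrib[of "\<lambda>x. x * _"] cong: if_cong)
qed

lemma tensor_apply_one_factor:
  fixes w :: "('l::finite \<Rightarrow> 'm::finite) \<Rightarrow> complex"
  shows "tensor_apply (\<lambda>l. if l = a then H else mat 1) w f = (\<Sum>j\<in>UNIV. H $ f a $ j * w (f(a := j)))"
proof -
  let ?R = "range (\<lambda>j. f(a := j))"
  have factor: "(\<Prod>l\<in>UNIV. (if l = a then H else mat 1) $ f l $ g l) =
      (if g \<in> ?R then H $ f a $ g a else 0)" for g
  proof (cases "g \<in> ?R")
    case True
    then obtain j where g: "g = f(a := j)" by auto
    have "(\<Prod>l\<in>UNIV. (if l = a then H else mat 1) $ f l $ g l) =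
        H $ f a $ g a * (\<Prod>l\<in>UNIV - {a}. (if l = a then H else mat 1) $ f l $ g l)"
      by (subst prod.remove[of _ a]) auto
    also have "(\<Prod>l\<in>UNIV - {a}. (if l = a then H else mat 1) $ f l $ g l) = 1"
      by (intro prod.neutral) (auto simp: g mat_def)
    finally show ?thesis using True by simp
  next
    case False
    then have "g \<noteq> f(a := g a)" by auto
    then obtain l where l: "l \<noteq> a" "g l \<noteq> f l" by (auto simp: fun_eq_iff split: if_splits)
    have "(\<Prod>l\<in>UNIV. (if l = a then H else mat 1) $ f l $ g l) = 0"
      using l by (intro prod_zero) (auto simp: mat_def intro!: bexI[of _ l])
    then show ?thesis using False by simp
  qed
  have "tensor_apply (\<lambda>l. if l = a then H else mat 1) w f = (\<Sum>g\<in>?R. H $ f a $ g a * w g)"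
    unfolding tensor_apply_def factor
    by (simp add: sum.inter_filter[symmetric] if_distrib[of "\<lambda>x. x * _"] cong: if_cong)
  also have "\<dots> = (\<Sum>j\<in>UNIV. H $ f a $ j * w (f(a := j)))"
    by (subst sum.reindex) (auto simp: inj_on_def fun_eq_iff split: if_splits)
  finally show ?thesis .
qed

lemma sum_maps_by_slot:
  fixes F :: "('a::finite \<Rightarrow> 'b::finite) \<Rightarrow> 'c::comm_monoid_add"
  shows "(\<Sum>f\<in>UNIV. F f) = (\<Sum>f\<in>{f. f a = c}. \<Sum>i\<in>UNIV. F (f(a := i)))"
proof -
  have reindex: "(\<Sum>f\<in>{f. f a = c}. F (f(a := i))) = (\<Sum>f\<in>{f. f a = i}. F f)" for i
    by (rule sum.reindex_bij_witness[of _ "\<lambda>f. f(a := c)" "\<lambda>f. f(a := i)"]) auto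
  have "(\<Sum>f\<in>{f. f a = c}. \<Sum>i\<in>UNIV. F (f(a := i))) = (\<Sum>i\<in>UNIV. \<Sum>f\<in>{f. f a = i}. F f)"
    by (subst sum.swap) (simp add: reindex)
  also have "\<dots> = (\<Sum>f\<in>UNIV. F f)"
    using sum.group[of "UNIV::('a \<Rightarrow> 'b) set" UNIV "\<lambda>f. f a" F] by simp
  finally show ?thesis ..
qed

lemma opnorm_mult_le: "norm (H *v v) \<le> opnorm H * norm v"
  unfolding opnorm_def by (rule onorm) (rule matrix_vector_mul_bounded_linear)

lemma opnorm_nonneg: "0 \<le> opnorm H"
  unfolding opnorm_def by (rule onorm_pos_le) (rule matrix_vector_mul_bounded_linear)

lemma opnorm_mat_1: "opnorm (mat 1 :: complex^'n::finite^'n) = 1"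
proof -
  have "(*v) (mat 1 :: complex^'n^'n) = (\<lambda>x. x)"
    by (rule ext) (simp add: matrix_vector_mul_lid)
  then show ?thesis unfolding opnorm_def using onorm_id by metis
qed

text \<open>A single factor H in slot a stretches the norm by at most \<parallel>H\<parallel>: the action splits into
  independent copies of H acting on the vectors j \<mapsto> w (f(a := j)).\<close>
lemma tensor_one_factor_bound:
  fixes w :: "('l::finite \<Rightarrow> 'm::finite) \<Rightarrow> complex"
  shows "sq_norm (tensor_apply (\<lambda>l. if l = a then H else mat 1) w) \<le> (opnorm H)^2 * sq_norm w"
proof -
  define v where "v f = (\<chi> j. w (f(a := j)))" for f
  have coord: "tensor_apply (\<lambda>l. if l = a then H else mat 1) w (f(a := i)) = (H *v v f) $ i" for f i
    unfolding tensor_apply_one_factor by (simp add: v_def matrix_vector_mult_def)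
  have "sq_norm (tensor_apply (\<lambda>l. if l = a then H else mat 1) w) =
      (\<Sum>f\<in>{f. f a = undefined}. (norm (H *v v f))^2)"
    unfolding sq_norm_def by (subst sum_maps_by_slot[of _ a undefined]) (simp add: coord norm_vec_sq)
  also have "\<dots> \<le> (\<Sum>f\<in>{f. f a = undefined}. (opnorm H)^2 * (norm (v f))^2)"
    by (intro sum_mono) (metis opnorm_mult_le norm_ge_zero power_mono power_mult_distrib)
  also have "\<dots> = (opnorm H)^2 * sq_norm w"
    unfolding sq_norm_def
    by (subst sum_maps_by_slot[of _ a undefined]) (simp add: norm_vec_sq v_def sum_distrib_left)
  finally show ?thesis .
qed

lemma tensor_bound_on:
  assumes "finite L"
  shows "sq_norm (tensor_apply (\<lambda>l. if l \<in> L then h l else mat 1) w)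
           \<le> (\<Prod>l\<in>L. opnorm (h l))^2 * sq_norm w"
  using assms
proof (induction L rule: finite_induct)
  case empty
  then show ?case by (simp add: tensor_apply_id)
next
  case (insert a L)
  let ?hL = "\<lambda>l. if l \<in> L then h l else mat 1"
  have split: "(\<lambda>l. if l \<in> insert a L then h l else mat 1) =
      (\<lambda>l. (if l = a then h a else mat 1) ** ?hL l)"
    using insert.hyps by (auto simp: fun_eq_iff matrix_mul_lid matrix_mul_rid)
  have "sq_norm (tensor_apply (\<lambda>l. if l \<in> insert a L then h l else mat 1) w) =
      sq_norm (tensor_apply (\<lambda>l. if l = a then h a else mat 1) (tensor_apply ?hL w))"
    unfolding split tensor_apply_comp ..
  also have "\<dots> \<le> (opnorm (h a))^2 * sq_norm (tensor_apply ?hL w)"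
    by (rule tensor_one_factor_bound)
  also have "\<dots> \<le> (opnorm (h a))^2 * ((\<Prod>l\<in>L. opnorm (h l))^2 * sq_norm w)"
    by (intro mult_left_mono insert.IH) simp
  also have "\<dots> = (\<Prod>l\<in>insert a L. opnorm (h l))^2 * sq_norm w"
    using insert.hyps by (simp add: power_mult_distrib)
  finally show ?case .
qed

lemma tensor_bound: "sq_norm (tensor_apply h w) \<le> (\<Prod>l\<in>UNIV. opnorm (h l))^2 * sq_norm w"
  using tensor_bound_on[of UNIV h w] by simp

section \<open>The permanental multilinear form\<close>

definition perm_form :: "('n::finite \<Rightarrow> complex^'n^'n) \<Rightarrow> complex" where
  "perm_form h = (\<Sum>\<sigma>\<in>{p. p permutes (UNIV::'n set)}. \<Sum>\<pi>\<in>{p. p permutes (UNIV::'n set)}.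
                    \<Prod>l\<in>UNIV. h l $ \<sigma> l $ \<pi> l)"

text \<open>The key estimate: |perm_form h| \<le> n! \<Prod>l \<parallel>h l\<parallel>, via perm_form h = <u, (\<Otimes>h) u> for the
  indicator u of the permutations, Cauchy-Schwarz and sq_norm u = n!.\<close>
lemma perm_form_bound:
  "cmod (perm_form (h::'n::finite \<Rightarrow> complex^'n^'n)) \<le> fact CARD('n) * (\<Prod>l\<in>UNIV. opnorm (h l))"
proof -
  define P where "P = {p. p permutes (UNIV::'n set)}"
  define u where "u f = (if f \<in> P then 1 else (0::complex))" for f :: "'n \<Rightarrow> 'n"
  have tensor_u: "tensor_apply h u f = (\<Sum>g\<in>P. \<Prod>l\<in>UNIV. h l $ f l $ g l)" for f
    unfolding tensor_apply_def u_def
    by (simp add: sum.inter_filter[symmetric] if_distrib[of "\<lambda>x. _ * x"] cong: if_cong)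
  have inner: "perm_form h = (\<Sum>f\<in>UNIV. u f * tensor_apply h u f)"
    unfolding perm_form_def tensor_u u_def P_def[symmetric]
    by (simp add: sum.inter_filter[symmetric] if_distrib[of "\<lambda>x. x * _"] cong: if_cong)
  have sq_norm_u: "sq_norm u = fact CARD('n)"
  proof -
    have "sq_norm u = (\<Sum>f\<in>UNIV. if f \<in> P then 1 else 0)"
      unfolding sq_norm_def u_def by (intro sum.cong) auto
    also have "\<dots> = card P" by (simp add: sum.If_cases)
    finally show ?thesis
      unfolding P_def using card_permutations[of "UNIV::'n set" "CARD('n)"] by simp
  qed
  have L2: "L2_set (\<lambda>f. cmod (w f)) UNIV = sqrt (sq_norm w)" for w :: "('n \<Rightarrow> 'n) \<Rightarrow> complex"
    unfolding L2_set_def sq_norm_def ..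
  have "cmod (perm_form h) \<le> (\<Sum>f\<in>UNIV. \<bar>cmod (u f)\<bar> * \<bar>cmod (tensor_apply h u f)\<bar>)"
    unfolding inner by (rule order_trans[OF norm_sum]) (simp add: norm_mult)
  also have "\<dots> \<le> sqrt (sq_norm u) * sqrt (sq_norm (tensor_apply h u))"
    using L2_set_mult_ineq[of "\<lambda>f. cmod (u f)" "\<lambda>f. cmod (tensor_apply h u f)" UNIV]
    by (simp add: L2)
  also have "\<dots> \<le> sqrt (sq_norm u) * sqrt ((\<Prod>l\<in>UNIV. opnorm (h l))^2 * sq_norm u)"
    by (intro mult_left_mono real_sqrt_le_mono tensor_bound) (simp add: sq_norm_nonneg)
  also have "\<dots> = sq_norm u * (\<Prod>l\<in>UNIV. opnorm (h l))"
    by (simp add: real_sqrt_mult prod_nonneg opnorm_nonneg sq_norm_nonneg)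
  finally show ?thesis by (simp add: sq_norm_u)
qed

lemma perm_form_permute_slots:
  assumes "\<rho> permutes (UNIV::'n::finite set)"
  shows "perm_form (\<lambda>l. h (\<rho> l)) = perm_form (h :: 'n \<Rightarrow> complex^'n^'n)"
proof -
  have inv_perm: "inv \<rho> permutes UNIV" using assms by (rule permutes_inv)
  have "perm_form h = (\<Sum>\<sigma>\<in>{p. p permutes (UNIV::'n set)}. \<Sum>\<pi>\<in>{p. p permutes (UNIV::'n set)}.
          \<Prod>l\<in>UNIV. h (\<rho> l) $ \<sigma> (\<rho> l) $ \<pi> (\<rho> l))"
    unfolding perm_form_def by (subst prod.permute[OF assms]) (simp add: o_def)
  also have "\<dots> = (\<Sum>\<sigma>\<in>{p. p permutes (UNIV::'n set)}. \<Sum>\<pi>\<in>{p. p permutes (UNIV::'n set)}.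
          \<Prod>l\<in>UNIV. h (\<rho> l) $ (\<sigma> \<circ> inv \<rho>) (\<rho> l) $ (\<pi> \<circ> inv \<rho>) (\<rho> l))"
    by (subst sum_permutations_compose_right[OF inv_perm],
        subst sum_permutations_compose_right[OF inv_perm]) simp
  also have "\<dots> = perm_form (\<lambda>l. h (\<rho> l))"
    unfolding perm_form_def using permutes_inverses(2)[OF assms] by simp
  finally show ?thesis ..
qed

lemma perm_form_const: "perm_form (\<lambda>_. B) = fact CARD('n) * per (B :: complex^'n::finite^'n)"
proof -
  have row_sum: "(\<Sum>\<pi>\<in>{p. p permutes (UNIV::'n set)}. \<Prod>l\<in>UNIV. B $ \<sigma> l $ \<pi> l) = per B"
    if \<sigma>: "\<sigma> permutes UNIV" for \<sigma>
  proof -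
    have inv_perm: "inv \<sigma> permutes UNIV" using \<sigma> by (rule permutes_inv)
    have "(\<Sum>\<pi>\<in>{p. p permutes (UNIV::'n set)}. \<Prod>l\<in>UNIV. B $ \<sigma> l $ \<pi> l) =
        (\<Sum>\<pi>\<in>{p. p permutes (UNIV::'n set)}. \<Prod>l\<in>UNIV. B $ \<sigma> (inv \<sigma> l) $ \<pi> (inv \<sigma> l))"
      by (subst prod.permute[OF inv_perm]) (simp add: o_def)
    also have "\<dots> = (\<Sum>\<pi>\<in>{p. p permutes (UNIV::'n set)}. \<Prod>l\<in>UNIV. B $ l $ (\<pi> \<circ> inv \<sigma>) l)"
      using permutes_inverses(1)[OF \<sigma>] by simp
    also have "\<dots> = per B"
      unfolding per_def by (rule sum_permutations_compose_right[OF inv_perm, symmetric])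
    finally show ?thesis .
  qed
  have "perm_form (\<lambda>_. B) = (\<Sum>\<sigma>\<in>{p. p permutes (UNIV::'n set)}. per B)"
    unfolding perm_form_def by (intro sum.cong refl row_sum) simp
  then show ?thesis
    using card_permutations[of "UNIV::'n set" "CARD('n)"] by simp
qed

lemma perm_form_zero_slot: "h l = 0 \<Longrightarrow> perm_form h = 0"
  unfolding perm_form_def by (intro sum.neutral ballI prod_zero) (auto intro!: exI[of _ l])

lemma cmat_scale_0 [simp]: "cmat_scale 0 M = 0" "cmat_scale s 0 = 0"
  by (simp_all add: cmat_scale_def vec_eq_iff)

lemma perm_form_affine_deriv:
  assumes H: "\<And>s l. H s l = P l + cmat_scale s (Q l)"
  shows "((\<lambda>s. perm_form (H s :: 'n::finite \<Rightarrow> complex^'n^'n)) has_field_derivative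
           (\<Sum>l\<in>UNIV. perm_form ((H s0)(l := Q l)))) (at s0)"
proof -
  define Pm where "Pm = {p. p permutes (UNIV::'n set)}"
  have entry_deriv: "((\<lambda>s. H s l $ a $ b) has_field_derivative Q l $ a $ b) (at x)" for l a b x
  proof -
    have "(\<lambda>s. H s l $ a $ b) = (\<lambda>s. P l $ a $ b + s * Q l $ a $ b)"
      by (simp add: H cmat_scale_def)
    then show ?thesis by (auto intro!: derivative_eq_intros)
  qed
  have deriv: "((\<lambda>s. perm_form (H s)) has_field_derivative
     (\<Sum>\<sigma>\<in>Pm. \<Sum>\<pi>\<in>Pm. \<Sum>l\<in>UNIV. Q l $ \<sigma> l $ \<pi> l * (\<Prod>k\<in>UNIV - {l}. H s0 k $ \<sigma> k $ \<pi> k))) (at s0)"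
    unfolding perm_form_def Pm_def[symmetric]
    by (intro DERIV_sum has_field_derivative_prod entry_deriv)
  have "Q l $ \<sigma> l $ \<pi> l * (\<Prod>k\<in>UNIV - {l}. H s0 k $ \<sigma> k $ \<pi> k) =
      (\<Prod>k\<in>UNIV. ((H s0)(l := Q l)) k $ \<sigma> k $ \<pi> k)" for \<sigma> \<pi> :: "'n \<Rightarrow> 'n" and l
    by (subst prod.remove[of _ l]) (auto intro!: prod.cong)
  then have "(\<Sum>\<sigma>\<in>Pm. \<Sum>\<pi>\<in>Pm. \<Sum>l\<in>UNIV. Q l $ \<sigma> l $ \<pi> l * (\<Prod>k\<in>UNIV - {l}. H s0 k $ \<sigma> k $ \<pi> k))
      = (\<Sum>l\<in>UNIV. perm_form ((H s0)(l := Q l)))"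
    unfolding perm_form_def Pm_def[symmetric]
    by (simp add: sum.swap[of _ UNIV] sum.swap[of _ UNIV Pm])
  then show ?thesis using deriv by simp
qed

lemma prod_if_mem:
  "(\<Prod>l\<in>(UNIV::'a::finite set). if l \<in> U then a l else b l)
     = (\<Prod>l\<in>U. a l) * (\<Prod>l\<in>UNIV - U. (b l :: 'c::comm_monoid_mult))"
  by (subst prod.If_cases) (auto simp: Diff_eq Int_commute)

lemma perm_form_expand_sum:
  "perm_form (\<lambda>_. A + X) = (\<Sum>U\<in>Pow UNIV. perm_form (\<lambda>l. if l \<in> U then X else (A::complex^'n::finite^'n)))"
proof -
  have "perm_form (\<lambda>_. A + X) =
      (\<Sum>\<sigma>\<in>{p. p permutes (UNIV::'n set)}. \<Sum>\<pi>\<in>{p. p permutes (UNIV::'n set)}.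
         \<Sum>U\<in>Pow UNIV. (\<Prod>l\<in>U. X $ \<sigma> l $ \<pi> l) * (\<Prod>l\<in>UNIV - U. A $ \<sigma> l $ \<pi> l))"
    unfolding perm_form_def
    by (intro sum.cong refl, subst prod_add[symmetric]) (simp_all add: add.commute)
  also have "\<dots> = (\<Sum>U\<in>Pow UNIV. perm_form (\<lambda>l. if l \<in> U then X else A))"
    unfolding perm_form_def
    by (subst sum.swap, subst (2) sum.swap)
       (simp add: if_distrib[of "\<lambda>M. M $ _ $ _"] prod_if_mem cong: if_cong)
  finally show ?thesis .
qed

section \<open>The perturbation bound\<close>

text \<open>Expanding n!(per (A+X) - per A) over the nonempty sets U of slots holding X and bounding
  each term by n! \<parallel>X\<parallel>^|U| \<parallel>A\<parallel>^(n-|U|) yields the binomial expansion of the right-hand side.\<close>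
lemma per_perturbation_bound:
  "norm (per (A + X) - per A) \<le> (opnorm A + opnorm X) ^ CARD('n) - opnorm A ^ CARD('n)"
  for A X :: "complex^'n::finite^'n"
proof -
  define N where "N = Pow (UNIV::'n set) - {{}}"
  define hU where "hU U = (\<lambda>l. if l \<in> U then X else A)" for U :: "'n set"
  define term_bound where "term_bound U = (\<Prod>l\<in>U. opnorm X) * (\<Prod>l\<in>UNIV - U. opnorm A)" for U :: "'n set"
  have fin: "finite (Pow (UNIV::'n set))" by simp
  have "perm_form (\<lambda>_. A + X) = perm_form (hU {}) + (\<Sum>U\<in>N. perm_form (hU U))"
    unfolding perm_form_expand_sum N_def hU_def by (subst sum.remove[OF fin, of "{}"]) auto
  then have diff: "fact CARD('n) * (per (A + X) - per A) = (\<Sum>U\<in>N. perm_form (hU U))"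
    by (simp add: perm_form_const hU_def right_diff_distrib)
  have term_le: "cmod (perm_form (hU U)) \<le> fact CARD('n) * term_bound U" for U
  proof -
    have "(\<Prod>l\<in>UNIV. opnorm (hU U l)) = (\<Prod>l\<in>UNIV. if l \<in> U then opnorm X else opnorm A)"
      unfolding hU_def by (intro prod.cong) auto
    then show ?thesis
      using perm_form_bound[of "hU U"] by (simp add: prod_if_mem term_bound_def)
  qed
  have binomial: "(opnorm A + opnorm X) ^ CARD('n) = opnorm A ^ CARD('n) + (\<Sum>U\<in>N. term_bound U)"
  proof -
    have "(opnorm A + opnorm X) ^ CARD('n) = (\<Sum>U\<in>Pow (UNIV::'n set). term_bound U)"
      using prod_add[of "UNIV::'n set" "\<lambda>_. opnorm X" "\<lambda>_. opnorm A"]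
      by (simp add: add.commute term_bound_def)
    then show ?thesis
      unfolding N_def by (subst (asm) sum.remove[OF fin, of "{}"]) (auto simp: term_bound_def)
  qed
  have "fact CARD('n) * norm (per (A + X) - per A) = cmod (\<Sum>U\<in>N. perm_form (hU U))"
    by (simp add: norm_mult flip: diff)
  also have "\<dots> \<le> (\<Sum>U\<in>N. fact CARD('n) * term_bound U)"
    by (rule order_trans[OF norm_sum sum_mono[OF term_le]])
  also have "\<dots> = fact CARD('n) * ((opnorm A + opnorm X) ^ CARD('n) - opnorm A ^ CARD('n))"
    by (simp add: binomial sum_distrib_left)
  finally show ?thesis by simp
qed

section \<open>Mixed partial derivatives of the permanent\<close>

definition fill_slots ::
    "('n \<Rightarrow> nat) \<Rightarrow> nat \<Rightarrow> (nat \<Rightarrow> complex^'n^'n) \<Rightarrow> complex^'n^'n \<Rightarrow> 'n \<Rightarrow> complex^'n^'n" where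
  "fill_slots c k Y M l = (if c l < k then Y (c l + 1) else M)"

lemma card_slots_from:
  assumes c: "bij_betw c (UNIV::'n::finite set) {0..<CARD('n)}"
  shows "card {l. k \<le> c l} = CARD('n) - k"
proof -
  have "c ` {l. k \<le> c l} = {k..<CARD('n)}"
    using c by (force simp: bij_betw_def)
  moreover have "inj_on c {l. k \<le> c l}"
    using c by (auto simp: bij_betw_def intro: inj_on_subset)
  ultimately show ?thesis
    by (metis card_atLeastLessThan card_image)
qed

text \<open>Moving one more direction into the filled slots: by symmetry of the form, putting
  Y (k+1) into any unfilled slot l gives the same value as putting it into slot number k.\<close>
lemma perm_form_fill_next:
  assumes c: "bij_betw c (UNIV::'n::finite set) {0..<CARD('n)}"
    and k: "k < CARD('n)" and l: "k \<le> c l"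
  shows "perm_form ((fill_slots c k Y M)(l := Y (Suc k))) = perm_form (fill_slots c (Suc k) Y M)"
proof -
  obtain b where b: "c b = k"
    using c k by (metis atLeastLessThan_iff bij_betw_def imageE zero_le)
  have c_inj: "c x = c y \<Longrightarrow> x = y" for x y
    using c by (auto simp: bij_betw_def dest: injD)
  define \<rho> where "\<rho> = Transposition.transpose l b"
  have "\<rho> permutes UNIV" unfolding \<rho>_def by (rule permutes_swap_id) auto
  moreover have "(\<lambda>x. ((fill_slots c k Y M)(l := Y (Suc k))) (\<rho> x)) = fill_slots c (Suc k) Y M"
  proof
    fix x
    show "((fill_slots c k Y M)(l := Y (Suc k))) (\<rho> x) = fill_slots c (Suc k) Y M x"
      using b l c_inj[of x b] c_inj[of l b]
      by (cases "x = b"; cases "x = l") (auto simp: \<rho>_def fill_slots_def)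
  qed
  ultimately show ?thesis
    using perm_form_permute_slots by metis
qed

text \<open>Differentiating in the direction Y (k+1) creates one term per unfilled slot, all equal
  by the previous lemma; there are n - k of them.\<close>
lemma perm_form_fill_deriv:
  assumes c: "bij_betw c (UNIV::'n::finite set) {0..<CARD('n)}" and k: "k < CARD('n)"
  shows "((\<lambda>s. perm_form (fill_slots c k Y (M + cmat_scale s (Y (Suc k))))) has_field_derivative
           of_nat (CARD('n) - k) * perm_form (fill_slots c (Suc k) Y (M + cmat_scale s0 (Y (Suc k)))))
         (at s0)"
proof -
  define Q where "Q l = (if c l < k then 0 else Y (Suc k))" for l
  define M0 where "M0 = M + cmat_scale s0 (Y (Suc k))"
  have "fill_slots c k Y (M + cmat_scale s (Y (Suc k))) l = fill_slots c k Y M l + cmat_scale s (Q l)"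
    for s l by (simp add: fill_slots_def Q_def)
  from perm_form_affine_deriv[OF this]
  have deriv: "((\<lambda>s. perm_form (fill_slots c k Y (M + cmat_scale s (Y (Suc k))))) has_field_derivative
      (\<Sum>l\<in>UNIV. perm_form ((fill_slots c k Y M0)(l := Q l)))) (at s0)"
    by (simp add: M0_def)
  have "perm_form ((fill_slots c k Y M0)(l := Q l)) =
      (if k \<le> c l then perm_form (fill_slots c (Suc k) Y M0) else 0)" for l
    using perm_form_fill_next[OF c k] perm_form_zero_slot[of "(fill_slots c k Y M0)(l := Q l)" l]
    by (auto simp: Q_def)
  then have "(\<Sum>l\<in>UNIV. perm_form ((fill_slots c k Y M0)(l := Q l))) =
      of_nat (CARD('n) - k) * perm_form (fill_slots c (Suc k) Y M0)"
    by (simp add: sum.If_cases card_slots_from[OF c] Int_def)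
  then show ?thesis using deriv by (simp add: M0_def)
qed

lemma matrix_line_upd:
  fixes m :: nat
  assumes "j \<in> {1..m}"
  shows "A + (\<Sum>k\<in>{1..m}. cmat_scale ((t(j := s)) k) (X k)) =
     (A + (\<Sum>k\<in>{1..m}. cmat_scale ((t(j := 0)) k) (X k))) + cmat_scale s (X j)"
proof -
  have "(\<Sum>k\<in>{1..m}. cmat_scale ((t(j := s)) k) (X k)) =
      cmat_scale s (X j) + (\<Sum>k\<in>{1..m} - {j}. cmat_scale (t k) (X k))"
    using assms by (subst sum.remove[of _ j]) (auto intro!: sum.cong)
  moreover have "(\<Sum>k\<in>{1..m}. cmat_scale ((t(j := 0)) k) (X k)) =
      (\<Sum>k\<in>{1..m} - {j}. cmat_scale (t k) (X k))"
    using assms by (subst sum.remove[of _ j]) (auto intro!: sum.cong)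
  ultimately show ?thesis by (simp add: algebra_simps)
qed

lemma mixed_partial_per:
  fixes A :: "complex^'n::finite^'n" and X :: "nat \<Rightarrow> complex^'n^'n"
  assumes c: "bij_betw c (UNIV::'n set) {0..<CARD('n)}" and m: "m \<le> CARD('n)"
  defines "B \<equiv> \<lambda>t. A + (\<Sum>k\<in>{1..m}. cmat_scale (t k) (X k))"
  assumes "k \<le> m"
  shows "mixed_partial k (\<lambda>t. per (B t)) t = perm_form (fill_slots c k X (B t)) / fact (CARD('n) - k)"
  using \<open>k \<le> m\<close>
proof (induction k arbitrary: t)
  case 0
  have "fill_slots c 0 X (B t) = (\<lambda>_. B t)" by (simp add: fill_slots_def fun_eq_iff)
  then show ?case by (simp add: perm_form_const)
next
  case (Suc k)
  have k: "k < CARD('n)" "Suc k \<in> {1..m}" using Suc.prems m by auto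
  define M where "M = B (t(Suc k := 0))"
  have line: "B (t(Suc k := s)) = M + cmat_scale s (X (Suc k))" for s
    unfolding B_def M_def by (rule matrix_line_upd[OF k(2)])
  have at_t: "M + cmat_scale (t (Suc k)) (X (Suc k)) = B t"
    using line[of "t (Suc k)"] by simp
  have "((\<lambda>s. perm_form (fill_slots c k X (B (t(Suc k := s)))) / fact (CARD('n) - k))
      has_field_derivative of_nat (CARD('n) - k) * perm_form (fill_slots c (Suc k) X (B t))
        / fact (CARD('n) - k)) (at (t (Suc k)))"
    unfolding line at_t[symmetric] by (rule DERIV_cdivide[OF perm_form_fill_deriv[OF c k(1)]])
  then have "mixed_partial (Suc k) (\<lambda>t. per (B t)) t =
      of_nat (CARD('n) - k) * perm_form (fill_slots c (Suc k) X (B t)) / fact (CARD('n) - k)"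
    using Suc by (simp add: DERIV_imp_deriv)
  also have "fact (CARD('n) - k) = (of_nat (CARD('n) - k) * fact (CARD('n) - Suc k) :: complex)"
  proof -
    have "CARD('n) - k = Suc (CARD('n) - Suc k)" using k(1) by simp
    then show ?thesis by (simp only: fact_Suc)
  qed
  finally show ?case
    using k(1) by simp
qed

text \<open>For unit directions the mixed partial at A is bounded by n!/(n-m)! \<parallel>A\<parallel>^(n-m): the filled
  slots contribute factors 1 to perm_form_bound and the remaining n - m slots factors \<parallel>A\<parallel>.\<close>
lemma Dper_unit_bound:
  fixes A :: "complex^'n::finite^'n"
  assumes m: "m \<le> CARD('n)" and X: "\<forall>k\<in>{1..m}. opnorm (X k) = 1"
  shows "norm (Dper m A X) \<le> fact CARD('n) / fact (CARD('n) - m) * opnorm A ^ (CARD('n) - m)"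
proof -
  obtain c where c: "bij_betw c (UNIV::'n set) {0..<CARD('n)}"
    using ex_bij_betw_finite_nat[of "UNIV::'n set"] by auto
  have Dper: "Dper m A X = perm_form (fill_slots c m X A) / fact (CARD('n) - m)"
    using mixed_partial_per[OF c m order.refl, of A X "\<lambda>_. 0"] by (simp add: Dper_def)
  have "(\<Prod>l\<in>UNIV. opnorm (fill_slots c m X A l)) = (\<Prod>l\<in>UNIV. if m \<le> c l then opnorm A else 1)"
    using X by (intro prod.cong) (auto simp: fill_slots_def)
  also have "\<dots> = (\<Prod>l\<in>{l\<in>UNIV. m \<le> c l}. opnorm A)"
    by (rule prod.inter_filter[symmetric]) simp
  also have "\<dots> = opnorm A ^ (CARD('n) - m)"
    by (simp add: card_slots_from[OF c])
  finally have "cmod (perm_form (fill_slots c m X A)) \<le> fact CARD('n) * opnorm A ^ (CARD('n) - m)"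
    using perm_form_bound[of "fill_slots c m X A"] by simp
  then show ?thesis
    unfolding Dper by (simp add: norm_divide divide_right_mono)
qed

theorem corollary3p6:
  fixes A X :: "complex^'n^'n" and m :: nat
  assumes "1 \<le> m" and "m \<le> CARD('n)"
  shows "Dper_norm m A \<le> fact CARD('n) / fact (CARD('n) - m) * opnorm A ^ (CARD('n) - m)
     \<and> norm (per (A + X) - per A) \<le> (opnorm A + opnorm X) ^ CARD('n) - opnorm A ^ CARD('n)"
proof
  let ?S = "{norm (Dper m A Y) | Y. \<forall>k\<in>{1..m}. opnorm (Y k) = 1}"
  have "norm (Dper m A (\<lambda>_. mat 1)) \<in> ?S"
    using opnorm_mat_1 by auto
  show "Dper_norm m A \<le> fact CARD('n) / fact (CARD('n) - m) * opnorm A ^ (CARD('n) - m)"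
    unfolding Dper_norm_def
  proof (rule cSup_least)
    show "?S \<noteq> {}" using \<open>norm (Dper m A (\<lambda>_. mat 1)) \<in> ?S\<close> by blast
    fix x assume "x \<in> ?S"
    then show "x \<le> fact CARD('n) / fact (CARD('n) - m) * opnorm A ^ (CARD('n) - m)"
      using Dper_unit_bound[OF assms(2)] by blast
  qed
  show "norm (per (A + X) - per A) \<le> (opnorm A + opnorm X) ^ CARD('n) - opnorm A ^ CARD('n)"
    by (rule per_perturbation_bound)
qed

end
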